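(* Let $K_2$ denote the metric space with two points at distance $1$. For a path $(X_t)_{0<t\ll 1}$ of finite metric spaces, let $f^X$ denote the (partially defined) function on $(0,\infty)$ given by $f^X(s)=\lim_{t\to 0}|sX_t|$. Then: (1) For every $\ell\in(1,\infty)$ there exists a path $(X_t)_{0<t\ll1}$ in $\operatorname{FMet}$ such that $X_t\to K_2$ in the Gromov--Hausdorff topology as $t\to0$, but $\lim_{s\to 0}f^X(s)=\ell$. (2) For every $L\in(2,\infty)$ there exists a path $(X_t)_{0<t\ll1}$ in $\operatorname{FMet}$ such that $X_t\to K_2$ as $t\to 0$, but $\lim_{s\to\infty}f^X(s)=L$. (3) For every $S\in(0,\infty)$ there exists a path $(X_t)_{0<t\ll1}$ in $\operatorname{FMet}$ such that $X_t\to K_2$ as $t\to0$, but the function $f^X$ has a singularity at $S$ (i.e. $f^X(s)$ is unbounded as $s\to S$).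
   Context: For a finite metric space $(X,d)$, its similarity matrix $Z_X$ is the $X\times X$ matrix with entries $e^{-d(x,y)}$. A weighting is a vector $\mathbf{w}\in\mathbb{R}^X$ with $Z_X\mathbf{w}=(1,\dots,1)^\top$; if one exists, the magnitude $|X|$ is the sum of its entries (independent of the choice). For $s>0$, $sX$ denotes the metric space $(X, s\,d)$. $\operatorname{FMet}$ is the set of isometry classes of finite metric spaces with the Gromov--Hausdorff metric. A path $(X_t)_{0<t\ll1}$ is a family of finite metric spaces indexed by $t$ in some interval $(0,\varepsilon)$. *)

theory Defs
  imports "HOL-Analysis.Analysis"
begin

definition finite_metric :: "'a set \<Rightarrow> ('a \<Rightarrow> 'a \<Rightarrow> real) \<Rightarrow> bool" where
  "finite_metric X d \<longleftrightarrow> finite X \<and>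
     (\<forall>x\<in>X. \<forall>y\<in>X. (d x y = 0 \<longleftrightarrow> x = y) \<and> d x y = d y x) \<and>
     (\<forall>x\<in>X. \<forall>y\<in>X. \<forall>z\<in>X. d x z \<le> d x y + d y z)"

definition weighting :: "'a set \<Rightarrow> ('a \<Rightarrow> 'a \<Rightarrow> real) \<Rightarrow> ('a \<Rightarrow> real) \<Rightarrow> bool" where
  "weighting X d w \<longleftrightarrow> (\<forall>x\<in>X. (\<Sum>y\<in>X. exp (- d x y) * w y) = 1)"

definition has_weighting :: "'a set \<Rightarrow> ('a \<Rightarrow> 'a \<Rightarrow> real) \<Rightarrow> bool" where
  "has_weighting X d \<longleftrightarrow> (\<exists>w. weighting X d w)"

definition magnitude :: "'a set \<Rightarrow> ('a \<Rightarrow> 'a \<Rightarrow> real) \<Rightarrow> real" where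
  "magnitude X d = (\<Sum>x\<in>X. (SOME w. weighting X d w) x)"

definition correspondences :: "'a set \<Rightarrow> 'b set \<Rightarrow> ('a \<times> 'b) set set" where
  "correspondences X Y = {R. R \<subseteq> X \<times> Y \<and> fst ` R = X \<and> snd ` R = Y}"

definition distortion :: "('a \<Rightarrow> 'a \<Rightarrow> real) \<Rightarrow> ('b \<Rightarrow> 'b \<Rightarrow> real) \<Rightarrow> ('a \<times> 'b) set \<Rightarrow> real" where
  "distortion dX dY R = (SUP pq \<in> R \<times> R. \<bar>dX (fst (fst pq)) (fst (snd pq)) - dY (snd (fst pq)) (snd (snd pq))\<bar>)"

definition gh_dist :: "'a set \<Rightarrow> ('a \<Rightarrow> 'a \<Rightarrow> real) \<Rightarrow> 'b set \<Rightarrow> ('b \<Rightarrow> 'b \<Rightarrow> real) \<Rightarrow> real" where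
  "gh_dist X dX Y dY = (1/2) * (INF R \<in> correspondences X Y. distortion dX dY R)"

definition fmet_path :: "(real \<Rightarrow> 'a set) \<Rightarrow> (real \<Rightarrow> 'a \<Rightarrow> 'a \<Rightarrow> real) \<Rightarrow> bool" where
  "fmet_path X d \<longleftrightarrow> (\<exists>\<epsilon>>0. \<forall>t\<in>{0<..<\<epsilon>}. finite_metric (X t) (d t))"

definition gh_tendsto :: "(real \<Rightarrow> 'a set) \<Rightarrow> (real \<Rightarrow> 'a \<Rightarrow> 'a \<Rightarrow> real) \<Rightarrow> 'b set \<Rightarrow> ('b \<Rightarrow> 'b \<Rightarrow> real) \<Rightarrow> bool" where
  "gh_tendsto X d Y dY \<longleftrightarrow> (\<forall>\<^sub>F t in at_right 0. X t \<noteq> {}) \<and>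
     ((\<lambda>t. gh_dist (X t) (d t) Y dY) \<longlongrightarrow> 0) (at_right 0)"

definition K2_dist :: "bool \<Rightarrow> bool \<Rightarrow> real" where
  "K2_dist x y = (if x = y then 0 else 1)"

definition fX_at :: "(real \<Rightarrow> 'a set) \<Rightarrow> (real \<Rightarrow> 'a \<Rightarrow> 'a \<Rightarrow> real) \<Rightarrow> real \<Rightarrow> real \<Rightarrow> bool" where
  "fX_at X d s v \<longleftrightarrow> (\<forall>\<^sub>F t in at_right 0. has_weighting (X t) (\<lambda>x y. s * d t x y)) \<and>
     ((\<lambda>t. magnitude (X t) (\<lambda>x y. s * d t x y)) \<longlongrightarrow> v) (at_right 0)"

end

theory Submission
  imports Defs "HOL-Real_Asymp.Real_Asymp"
begin

text \<open>The witnesses are two clusters of \<open>n + 2\<close> points that collapse as \<open>t \<rightarrow> 0\<close>. In each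
  cluster two poles are at distance \<open>a t\<close>, the \<open>n\<close> ordinary points at distance \<open>b t\<close>, and a pole
  and an ordinary point at distance \<open>t + p t\<^sup>2\<close>; across the clusters points of the same kind are
  at distance \<open>1\<close> and points of different kinds at distance \<open>1 + q t\<^sup>2\<close>. By symmetry a weighting
  of \<open>sX\<^sub>t\<close> is constant on poles and on ordinary points, so \<open>|sX\<^sub>t|\<close> is \<open>2 N / D\<close> for the
  numerator \<open>N\<close> and determinant \<open>D\<close> of a \<open>2 \<times> 2\<close> linear system. When \<open>4 n = 2 (n - 1) b + n a\<close>
  the terms of order \<open>t\<close> in \<open>N\<close> cancel, \<open>N / t\<^sup>2\<close> and \<open>D / t\<^sup>2\<close> converge, and \<open>f\<^sup>X(s)\<close> becomes an
  explicit ratio of exponential polynomials in \<open>s\<close>. Its behaviour as \<open>s \<rightarrow> 0\<close>, as \<open>s \<rightarrow> \<infinity>\<close> and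
  near a prescribed \<open>S\<close> is then tuned through \<open>n, a, b, p, q\<close>, while \<open>X\<^sub>t \<rightarrow> K\<^sub>2\<close> regardless.\<close>

section \<open>Distortion, Gromov--Hausdorff distance and magnitude\<close>

lemma distortion_nonneg:
  assumes "finite R" "R \<noteq> {}"
  shows "0 \<le> distortion dX dY R"
proof -
  obtain r where "r \<in> R" using assms(2) by blast
  then show ?thesis
    unfolding distortion_def using assms(1)
    by (intro cSUP_upper2[where x="(r, r)"]) (auto intro: bdd_above_finite)
qed

lemma distortion_le:
  assumes "R \<noteq> {}" and "\<And>x y x' y'. (x, y) \<in> R \<Longrightarrow> (x', y') \<in> R \<Longrightarrow> \<bar>dX x x' - dY y y'\<bar> \<le> c"
  shows "distortion dX dY R \<le> c"
  unfolding distortion_def using assms by (intro cSUP_least) auto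

lemma distortion_correspondence_nonneg:
  assumes "finite X" "finite Y" "X \<noteq> {}" "R \<in> correspondences X Y"
  shows "0 \<le> distortion dX dY R"
proof -
  have sub: "R \<subseteq> X \<times> Y" and "fst ` R = X" using assms(4) by (auto simp: correspondences_def)
  then have "R \<noteq> {}" using assms(3) by auto
  moreover have "finite R" by (rule finite_subset[OF sub]) (simp add: assms(1,2))
  ultimately show ?thesis by (intro distortion_nonneg)
qed

lemma gh_dist_nonneg:
  assumes "finite X" "finite Y" "X \<noteq> {}" "Y \<noteq> {}"
  shows "0 \<le> gh_dist X dX Y dY"
proof -
  have "X \<times> Y \<in> correspondences X Y" using assms(3,4) by (auto simp: correspondences_def)
  then show ?thesis
    unfolding gh_dist_def using distortion_correspondence_nonneg[OF assms(1-3)]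
    by (auto intro!: cINF_greatest)
qed

lemma gh_dist_le_distortion:
  assumes "finite X" "finite Y" "X \<noteq> {}" "R \<in> correspondences X Y"
  shows "gh_dist X dX Y dY \<le> distortion dX dY R / 2"
proof -
  have "bdd_below (distortion dX dY ` correspondences X Y)"
    using distortion_correspondence_nonneg[OF assms(1-3)] by (auto intro!: bdd_belowI[of _ 0])
  then show ?thesis
    unfolding gh_dist_def using assms(4) by (auto intro!: cINF_lower)
qed

text \<open>Double counting: \<open>\<Sum> w' = w'\<^sup>T Z w = (Z w')\<^sup>T w = \<Sum> w\<close> for the chosen weighting \<open>w'\<close>.\<close>
lemma magnitude_eq_sum_weighting:
  assumes "finite X" and sym: "\<And>x y. x \<in> X \<Longrightarrow> y \<in> X \<Longrightarrow> d x y = d y x"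
    and w: "weighting X d w"
  shows "magnitude X d = sum w X"
proof -
  define w' where "w' = (SOME w. weighting X d w)"
  have w': "weighting X d w'" unfolding w'_def by (rule someI[of "weighting X d", OF w])
  have "sum w' X = (\<Sum>x\<in>X. w' x * (\<Sum>y\<in>X. exp (- d x y) * w y))"
    using w unfolding weighting_def by simp
  also have "\<dots> = (\<Sum>x\<in>X. \<Sum>y\<in>X. w' x * exp (- d x y) * w y)"
    by (simp add: sum_distrib_left mult.assoc)
  also have "\<dots> = (\<Sum>y\<in>X. \<Sum>x\<in>X. w' x * exp (- d x y) * w y)"
    by (rule sum.swap)
  also have "\<dots> = (\<Sum>y\<in>X. w y * (\<Sum>x\<in>X. exp (- d y x) * w' x))"
    by (intro sum.cong refl) (auto simp: sum_distrib_left sym mult_ac)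
  also have "\<dots> = sum w X"
    using w' unfolding weighting_def by simp
  finally show ?thesis unfolding magnitude_def w'_def by simp
qed

section \<open>Two clusters of points\<close>

text \<open>Points \<open>0..<n+2\<close> and \<open>n+2..<2n+4\<close> form the two clusters (the side is \<open>True\<close> on the first);
  the first two points of each cluster are its poles.\<close>
definition cluster_points :: "nat \<Rightarrow> nat set" where
  "cluster_points n = {0..<2 * n + 4}"

definition cluster_side :: "nat \<Rightarrow> nat \<Rightarrow> bool" where
  "cluster_side n k \<longleftrightarrow> k < n + 2"

definition cluster_pole :: "nat \<Rightarrow> nat \<Rightarrow> bool" where
  "cluster_pole n k \<longleftrightarrow> k < 2 \<or> (n + 2 \<le> k \<and> k < n + 4)"

definition point_class :: "nat \<Rightarrow> nat \<Rightarrow> bool \<times> bool" where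
  "point_class n k = (cluster_side n k, cluster_pole n k)"

fun class_dist :: "real \<Rightarrow> real \<Rightarrow> real \<Rightarrow> real \<Rightarrow> bool \<times> bool \<Rightarrow> bool \<times> bool \<Rightarrow> real" where
  "class_dist \<alpha> \<beta> \<gamma> \<epsilon> (c, p) (c', p') =
     (if c = c' then (if p \<and> p' then \<alpha> else if p \<or> p' then \<gamma> else \<beta>)
      else if p = p' then 1 else 1 + \<epsilon>)"

definition cluster_dist :: "nat \<Rightarrow> real \<Rightarrow> real \<Rightarrow> real \<Rightarrow> real \<Rightarrow> nat \<Rightarrow> nat \<Rightarrow> real" where
  "cluster_dist n \<alpha> \<beta> \<gamma> \<epsilon> x y =
     (if x = y then 0 else class_dist \<alpha> \<beta> \<gamma> \<epsilon> (point_class n x) (point_class n y))"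

lemma class_dist_commute: "class_dist \<alpha> \<beta> \<gamma> \<epsilon> i j = class_dist \<alpha> \<beta> \<gamma> \<epsilon> j i"
  by (cases i; cases j) auto

context
  fixes \<alpha> \<beta> \<gamma> \<epsilon> :: real
  assumes pos: "0 < \<alpha>" "0 < \<beta>" and within: "\<alpha> \<le> 2 * \<gamma>" "\<beta> \<le> 2 * \<gamma>" "\<gamma> \<le> 1 / 2"
    and across: "\<bar>\<epsilon>\<bar> \<le> \<alpha>" "\<bar>\<epsilon>\<bar> \<le> \<beta>" "\<bar>\<epsilon>\<bar> \<le> \<gamma>"
begin

lemma class_dist_pos: "0 < class_dist \<alpha> \<beta> \<gamma> \<epsilon> i j"
  using pos within across by (cases i; cases j) (auto simp: abs_le_iff)

lemma class_dist_triangle: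
  "class_dist \<alpha> \<beta> \<gamma> \<epsilon> i k \<le> class_dist \<alpha> \<beta> \<gamma> \<epsilon> i j + class_dist \<alpha> \<beta> \<gamma> \<epsilon> j k"
  using pos within across by (cases i; cases j; cases k) (auto simp: abs_le_iff)

lemma finite_metric_cluster_dist: "finite_metric (cluster_points n) (cluster_dist n \<alpha> \<beta> \<gamma> \<epsilon>)"
  unfolding finite_metric_def
proof (intro conjI ballI)
  show "finite (cluster_points n)" by (simp add: cluster_points_def)
  fix x y z
  show "cluster_dist n \<alpha> \<beta> \<gamma> \<epsilon> x y = 0 \<longleftrightarrow> x = y"
    using class_dist_pos by (auto simp: cluster_dist_def less_le)
  show "cluster_dist n \<alpha> \<beta> \<gamma> \<epsilon> x y = cluster_dist n \<alpha> \<beta> \<gamma> \<epsilon> y x"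
    by (simp add: cluster_dist_def class_dist_commute)
  show "cluster_dist n \<alpha> \<beta> \<gamma> \<epsilon> x z \<le> cluster_dist n \<alpha> \<beta> \<gamma> \<epsilon> x y + cluster_dist n \<alpha> \<beta> \<gamma> \<epsilon> y z"
    using class_dist_triangle class_dist_pos[THEN less_imp_le]
    by (auto simp: cluster_dist_def)
qed

end

lemma class_dist_K2_dist:
  "\<bar>class_dist \<alpha> \<beta> \<gamma> \<epsilon> i j - K2_dist (fst i) (fst j)\<bar> \<le> \<bar>\<alpha>\<bar> + \<bar>\<beta>\<bar> + \<bar>\<gamma>\<bar> + \<bar>\<epsilon>\<bar>"
  by (cases i; cases j) (auto simp: K2_dist_def)

lemma gh_dist_cluster_K2:
  "gh_dist (cluster_points n) (cluster_dist n \<alpha> \<beta> \<gamma> \<epsilon>) UNIV K2_dist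
     \<le> (\<bar>\<alpha>\<bar> + \<bar>\<beta>\<bar> + \<bar>\<gamma>\<bar> + \<bar>\<epsilon>\<bar>) / 2"
proof -
  define R where "R = (\<lambda>x. (x, cluster_side n x)) ` cluster_points n"
  have "True \<in> cluster_side n ` cluster_points n" "False \<in> cluster_side n ` cluster_points n"
    by (rule rev_image_eqI[of 0], simp_all add: cluster_points_def cluster_side_def)
      (rule rev_image_eqI[of "n + 2"], simp_all add: cluster_points_def cluster_side_def)
  then have "snd ` R = UNIV"
    unfolding R_def image_image UNIV_bool by auto
  then have R: "R \<in> correspondences (cluster_points n) UNIV"
    unfolding correspondences_def R_def by (auto simp: image_image)
  have "distortion (cluster_dist n \<alpha> \<beta> \<gamma> \<epsilon>) K2_dist R \<le> \<bar>\<alpha>\<bar> + \<bar>\<beta>\<bar> + \<bar>\<gamma>\<bar> + \<bar>\<epsilon>\<bar>"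
  proof (rule distortion_le)
    show "R \<noteq> {}" by (auto simp: R_def cluster_points_def)
    fix x y x' y' assume "(x, y) \<in> R" "(x', y') \<in> R"
    then have "y = fst (point_class n x)" "y' = fst (point_class n x')"
      by (auto simp: R_def point_class_def)
    then show "\<bar>cluster_dist n \<alpha> \<beta> \<gamma> \<epsilon> x x' - K2_dist y y'\<bar> \<le> \<bar>\<alpha>\<bar> + \<bar>\<beta>\<bar> + \<bar>\<gamma>\<bar> + \<bar>\<epsilon>\<bar>"
      using class_dist_K2_dist[of \<alpha> \<beta> \<gamma> \<epsilon> "point_class n x" "point_class n x'"]
      by (cases "x = x'") (simp_all add: cluster_dist_def K2_dist_def)
  qed
  moreover have "gh_dist (cluster_points n) (cluster_dist n \<alpha> \<beta> \<gamma> \<epsilon>) UNIV K2_dist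
      \<le> distortion (cluster_dist n \<alpha> \<beta> \<gamma> \<epsilon>) K2_dist R / 2"
    by (rule gh_dist_le_distortion[OF _ _ _ R]) (simp_all add: cluster_points_def)
  ultimately show ?thesis by (meson divide_right_mono order_trans zero_le_numeral)
qed

lemma sum_cluster_points:
  fixes F :: "bool \<times> bool \<Rightarrow> real"
  shows "(\<Sum>k\<in>cluster_points n. F (point_class n k))
    = 2 * F (True, True) + n * F (True, False) + 2 * F (False, True) + n * F (False, False)"
proof -
  let ?G = "\<lambda>k. F (point_class n k)"
  have block: "(\<Sum>k=l..<h. ?G k) = real (h - l) * c" if "\<And>k. l \<le> k \<Longrightarrow> k < h \<Longrightarrow> ?G k = c" for l h c
    using that by (simp add: sum.cong[of "{l..<h}" "{l..<h}" ?G "\<lambda>_. c"])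
  have split: "sum g {i..<m} = sum g {i..<j} + sum g {j..<k} + sum g {k..<l} + sum g {l..<m}"
    if "i \<le> j" "j \<le> k" "k \<le> l" "l \<le> m" for g :: "nat \<Rightarrow> real" and i j k l m :: nat
    using that by (simp add: sum.atLeastLessThan_concat)
  have "(\<Sum>k\<in>cluster_points n. ?G k)
      = (\<Sum>k=0..<2. ?G k) + (\<Sum>k=2..<n+2. ?G k) + (\<Sum>k=n+2..<n+4. ?G k) + (\<Sum>k=n+4..<2*n+4. ?G k)"
    unfolding cluster_points_def by (rule split) simp_all
  also have "\<dots> = 2 * F (True, True) + n * F (True, False) + 2 * F (False, True)
      + n * F (False, False)"
    by (subst (1 2 3 4) block) (auto simp: point_class_def cluster_side_def cluster_pole_def)
  finally show ?thesis .
qed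

lemma weighting_cluster_dist:
  fixes s \<alpha> \<beta> \<gamma> \<epsilon> u v :: real
  defines "A \<equiv> exp (- (s * \<alpha>))" and "B \<equiv> exp (- (s * \<beta>))" and "C \<equiv> exp (- (s * \<gamma>))"
    and "U \<equiv> exp (- s)" and "R \<equiv> exp (- (s * (1 + \<epsilon>)))"
  assumes pole_row: "u * (1 + A + 2 * U) + v * n * (C + R) = 1"
    and ordinary_row: "2 * u * (C + R) + v * (1 + (real n - 1) * B + n * U) = 1"
  shows "weighting (cluster_points n) (\<lambda>x y. s * cluster_dist n \<alpha> \<beta> \<gamma> \<epsilon> x y)
           (\<lambda>k. if cluster_pole n k then u else v)"
  unfolding weighting_def
proof
  fix x assume x: "x \<in> cluster_points n"
  let ?w = "\<lambda>c :: bool \<times> bool. if snd c then u else v"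
  let ?K = "\<lambda>c. exp (- (s * class_dist \<alpha> \<beta> \<gamma> \<epsilon> (point_class n x) c)) * ?w c"
  have w: "(if cluster_pole n k then u else v) = ?w (point_class n k)" for k
    by (simp add: point_class_def)
  have "(\<Sum>y\<in>cluster_points n.
          exp (- (s * cluster_dist n \<alpha> \<beta> \<gamma> \<epsilon> x y)) * (if cluster_pole n y then u else v))
      = ?w (point_class n x) + (\<Sum>y\<in>cluster_points n - {x}. ?K (point_class n y))"
    using x by (simp add: sum.remove[of _ x] cluster_points_def cluster_dist_def w)
  also have "\<dots> = ?w (point_class n x) - ?K (point_class n x)
      + (\<Sum>y\<in>cluster_points n. ?K (point_class n y))"
    using x by (simp add: sum_diff1 cluster_points_def)
  also have "\<dots> = 1"
    unfolding sum_cluster_points[of ?K n] using pole_row ordinary_row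
    by (cases "point_class n x") (auto simp: A_def B_def C_def U_def R_def algebra_simps)
  finally show "(\<Sum>y\<in>cluster_points n.
      exp (- (s * cluster_dist n \<alpha> \<beta> \<gamma> \<epsilon> x y)) * (if cluster_pole n y then u else v)) = 1" .
qed

text \<open>Cramer's rule for the \<open>2 \<times> 2\<close> weighting system, in terms of the similarities \<open>A, B, C, U, R\<close>
  of the five nonzero distances; they are written through the deficits \<open>1 - A\<close>, \<open>1 - B\<close>, \<open>1 - C\<close>,
  \<open>U - R\<close>, which vanish as the clusters collapse.\<close>
definition cluster_num :: "nat \<Rightarrow> real \<Rightarrow> real \<Rightarrow> real \<Rightarrow> real \<Rightarrow> real \<Rightarrow> real" where
  "cluster_num n A B C U R =
     4 * real n * ((1 - C) + (U - R)) - 2 * (real n - 1) * (1 - B) - n * (1 - A)"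

definition cluster_det :: "nat \<Rightarrow> real \<Rightarrow> real \<Rightarrow> real \<Rightarrow> real \<Rightarrow> real \<Rightarrow> real" where
  "cluster_det n A B C U R = (1 + U) * cluster_num n A B C U R + (real n - 1) * (1 - A) * (1 - B)
     - 2 * real n * ((1 - C) + (U - R))\<^sup>2"

lemma magnitude_cluster_dist:
  fixes s \<alpha> \<beta> \<gamma> \<epsilon> :: real
  defines "A \<equiv> exp (- (s * \<alpha>))" and "B \<equiv> exp (- (s * \<beta>))" and "C \<equiv> exp (- (s * \<gamma>))"
    and "U \<equiv> exp (- s)" and "R \<equiv> exp (- (s * (1 + \<epsilon>)))"
  assumes det: "cluster_det n A B C U R \<noteq> 0"
  shows "has_weighting (cluster_points n) (\<lambda>x y. s * cluster_dist n \<alpha> \<beta> \<gamma> \<epsilon> x y)"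
    and "magnitude (cluster_points n) (\<lambda>x y. s * cluster_dist n \<alpha> \<beta> \<gamma> \<epsilon> x y)
           = 2 * cluster_num n A B C U R / cluster_det n A B C U R"
proof -
  let ?D = "cluster_det n A B C U R"
  define u where "u = (1 + (real n - 1) * B + n * U - n * (C + R)) / ?D"
  define v where "v = (1 + A + 2 * U - 2 * (C + R)) / ?D"
  have cramer: "?D = (1 + A + 2 * U) * (1 + (real n - 1) * B + n * U) - n * (C + R) * (2 * (C + R))"
    by (simp add: cluster_det_def cluster_num_def algebra_simps power2_eq_square)
  have "u * (1 + A + 2 * U) + v * n * (C + R) = 1"
    and "2 * u * (C + R) + v * (1 + (real n - 1) * B + n * U) = 1"
    using det unfolding u_def v_def
    by (simp_all add: field_simps) (simp_all add: cramer algebra_simps)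
  then have w: "weighting (cluster_points n) (\<lambda>x y. s * cluster_dist n \<alpha> \<beta> \<gamma> \<epsilon> x y)
      (\<lambda>k. if cluster_pole n k then u else v)"
    unfolding A_def B_def C_def U_def R_def by (rule weighting_cluster_dist)
  then show "has_weighting (cluster_points n) (\<lambda>x y. s * cluster_dist n \<alpha> \<beta> \<gamma> \<epsilon> x y)"
    unfolding has_weighting_def by blast
  have "magnitude (cluster_points n) (\<lambda>x y. s * cluster_dist n \<alpha> \<beta> \<gamma> \<epsilon> x y)
      = (\<Sum>k\<in>cluster_points n. if snd (point_class n k) then u else v)"
    by (subst magnitude_eq_sum_weighting[OF _ _ w])
      (auto simp: cluster_points_def cluster_dist_def class_dist_commute point_class_def)
  also have "\<dots> = 2 * (2 * u + n * v)"
    unfolding sum_cluster_points[of "\<lambda>c. if snd c then u else v"] by simp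
  also have "\<dots> = 2 * cluster_num n A B C U R / ?D"
    using det unfolding u_def v_def cluster_num_def by (simp add: field_simps)
  finally show "magnitude (cluster_points n) (\<lambda>x y. s * cluster_dist n \<alpha> \<beta> \<gamma> \<epsilon> x y)
      = 2 * cluster_num n A B C U R / ?D" .
qed

definition path_dist :: "nat \<Rightarrow> real \<Rightarrow> real \<Rightarrow> real \<Rightarrow> real \<Rightarrow> real \<Rightarrow> nat \<Rightarrow> nat \<Rightarrow> real" where
  "path_dist n a b p q t = cluster_dist n (a * t) (b * t) (t + p * t\<^sup>2) (q * t\<^sup>2)"

lemma fmet_path_dist:
  assumes "0 < a" "a < 2" "0 < b" "b < 2"
  shows "fmet_path (\<lambda>_. cluster_points n) (path_dist n a b p q)"
proof -
  have "\<forall>\<^sub>F t in at_right 0. 0 < a * t \<and> 0 < b * t \<and> a * t \<le> 2 * (t + p * t\<^sup>2) \<and>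
      b * t \<le> 2 * (t + p * t\<^sup>2) \<and> t + p * t\<^sup>2 \<le> 1 / 2 \<and>
      \<bar>q\<bar> * t\<^sup>2 \<le> a * t \<and> \<bar>q\<bar> * t\<^sup>2 \<le> b * t \<and> \<bar>q\<bar> * t\<^sup>2 \<le> t + p * t\<^sup>2"
    using assms by - ((rule eventually_conj, real_asymp)+, real_asymp)
  then have "\<forall>\<^sub>F t in at_right 0. finite_metric (cluster_points n) (path_dist n a b p q t)"
    by eventually_elim (auto simp: path_dist_def abs_mult intro!: finite_metric_cluster_dist)
  then obtain \<delta> where "\<delta> > 0"
    and "\<forall>t>0. t < \<delta> \<longrightarrow> finite_metric (cluster_points n) (path_dist n a b p q t)"
    unfolding eventually_at_right_field by auto
  then show ?thesis unfolding fmet_path_def by auto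
qed

lemma gh_tendsto_path_dist: "gh_tendsto (\<lambda>_. cluster_points n) (path_dist n a b p q) UNIV K2_dist"
proof -
  let ?bound = "\<lambda>t::real. (\<bar>a * t\<bar> + \<bar>b * t\<bar> + \<bar>t + p * t\<^sup>2\<bar> + \<bar>q * t\<^sup>2\<bar>) / 2"
  have "((\<lambda>t. gh_dist (cluster_points n) (path_dist n a b p q t) UNIV K2_dist) \<longlongrightarrow> 0) (at_right 0)"
  proof (rule tendsto_sandwich[of "\<lambda>_. 0" _ _ ?bound])
    show "\<forall>\<^sub>F t in at_right 0. 0 \<le> gh_dist (cluster_points n) (path_dist n a b p q t) UNIV K2_dist"
      by (intro always_eventually allI gh_dist_nonneg) (auto simp: cluster_points_def)
    show "\<forall>\<^sub>F t in at_right 0.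
        gh_dist (cluster_points n) (path_dist n a b p q t) UNIV K2_dist \<le> ?bound t"
      unfolding path_dist_def by (intro always_eventually allI gh_dist_cluster_K2)
    have "(?bound \<longlongrightarrow> ?bound 0) (at_right 0)"
      by (intro tendsto_intros) auto
    then show "(?bound \<longlongrightarrow> 0) (at_right 0)" by simp
  qed simp
  then show ?thesis
    unfolding gh_tendsto_def by (simp add: cluster_points_def)
qed

section \<open>The magnitude function of the collapsing path\<close>

lemma tendsto_divide_of_second_order:
  fixes f :: "real \<Rightarrow> real"
  assumes "((\<lambda>t. (f t - c * t) / t\<^sup>2) \<longlongrightarrow> d) (at_right 0)"
  shows "((\<lambda>t. f t / t) \<longlongrightarrow> c) (at_right 0)"
proof -
  have "((\<lambda>t. t * ((f t - c * t) / t\<^sup>2) + c) \<longlongrightarrow> 0 * d + c) (at_right 0)"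
    by (intro tendsto_intros assms)
  moreover have "\<forall>\<^sub>F t in at_right 0. t * ((f t - c * t) / t\<^sup>2) + c = f t / t"
    using eventually_at_right_less[of 0] by eventually_elim (simp add: field_simps power2_eq_square)
  ultimately show ?thesis by (simp add: Lim_transform_eventually)
qed

text \<open>The hypothesis \<open>linear\<close> cancels the terms of order \<open>t\<close> in the numerator.\<close>
lemma cluster_num_tendsto:
  fixes A B C U R :: "real \<Rightarrow> real"
  assumes A: "((\<lambda>t. (1 - A t - a\<^sub>1 * t) / t\<^sup>2) \<longlongrightarrow> a\<^sub>2) (at_right 0)"
    and B: "((\<lambda>t. (1 - B t - b\<^sub>1 * t) / t\<^sup>2) \<longlongrightarrow> b\<^sub>2) (at_right 0)"
    and C: "((\<lambda>t. (1 - C t - c\<^sub>1 * t) / t\<^sup>2) \<longlongrightarrow> c\<^sub>2) (at_right 0)"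
    and UR: "((\<lambda>t. (U t - R t) / t\<^sup>2) \<longlongrightarrow> r) (at_right 0)"
    and linear: "4 * real n * c\<^sub>1 = 2 * (real n - 1) * b\<^sub>1 + n * a\<^sub>1"
  shows "((\<lambda>t. cluster_num n (A t) (B t) (C t) (U t) (R t) / t\<^sup>2)
           \<longlongrightarrow> 4 * real n * (c\<^sub>2 + r) - 2 * (real n - 1) * b\<^sub>2 - n * a\<^sub>2) (at_right 0)"
proof (rule Lim_transform_eventually)
  show "((\<lambda>t. 4 * real n * ((1 - C t - c\<^sub>1 * t) / t\<^sup>2 + (U t - R t) / t\<^sup>2)
      - 2 * (real n - 1) * ((1 - B t - b\<^sub>1 * t) / t\<^sup>2) - n * ((1 - A t - a\<^sub>1 * t) / t\<^sup>2))
      \<longlongrightarrow> 4 * real n * (c\<^sub>2 + r) - 2 * (real n - 1) * b\<^sub>2 - n * a\<^sub>2) (at_right 0)"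
    by (intro tendsto_intros A B C UR)
  have "cluster_num n (A t) (B t) (C t) (U t) (R t)
      = 4 * real n * ((1 - C t - c\<^sub>1 * t) + (U t - R t)) - 2 * (real n - 1) * (1 - B t - b\<^sub>1 * t)
        - n * (1 - A t - a\<^sub>1 * t) + t * (4 * real n * c\<^sub>1 - 2 * (real n - 1) * b\<^sub>1 - n * a\<^sub>1)" for t
    by (simp add: cluster_num_def algebra_simps)
  then have expand: "cluster_num n (A t) (B t) (C t) (U t) (R t)
      = 4 * real n * ((1 - C t - c\<^sub>1 * t) + (U t - R t)) - 2 * (real n - 1) * (1 - B t - b\<^sub>1 * t)
        - n * (1 - A t - a\<^sub>1 * t)" for t
    using linear by simp
  show "\<forall>\<^sub>F t in at_right 0. 4 * real n * ((1 - C t - c\<^sub>1 * t) / t\<^sup>2 + (U t - R t) / t\<^sup>2)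
      - 2 * (real n - 1) * ((1 - B t - b\<^sub>1 * t) / t\<^sup>2) - n * ((1 - A t - a\<^sub>1 * t) / t\<^sup>2)
      = cluster_num n (A t) (B t) (C t) (U t) (R t) / t\<^sup>2"
    using eventually_at_right_less[of 0] by eventually_elim (simp add: expand field_simps)
qed

lemma cluster_det_tendsto:
  fixes A B C U R :: "real \<Rightarrow> real"
  assumes num: "((\<lambda>t. cluster_num n (A t) (B t) (C t) (U t) (R t) / t\<^sup>2) \<longlongrightarrow> N) (at_right 0)"
    and A: "((\<lambda>t. (1 - A t) / t) \<longlongrightarrow> a\<^sub>1) (at_right 0)"
    and B: "((\<lambda>t. (1 - B t) / t) \<longlongrightarrow> b\<^sub>1) (at_right 0)"
    and C: "((\<lambda>t. (1 - C t) / t) \<longlongrightarrow> c\<^sub>1) (at_right 0)"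
    and UR: "((\<lambda>t. (U t - R t) / t\<^sup>2) \<longlongrightarrow> r) (at_right 0)"
    and U: "(U \<longlongrightarrow> u) (at_right 0)"
  shows "((\<lambda>t. cluster_det n (A t) (B t) (C t) (U t) (R t) / t\<^sup>2)
           \<longlongrightarrow> (1 + u) * N + (real n - 1) * a\<^sub>1 * b\<^sub>1 - 2 * real n * c\<^sub>1\<^sup>2) (at_right 0)"
proof (rule Lim_transform_eventually)
  have "((\<lambda>t. (1 + U t) * (cluster_num n (A t) (B t) (C t) (U t) (R t) / t\<^sup>2)
        + (real n - 1) * ((1 - A t) / t) * ((1 - B t) / t)
        - 2 * real n * ((1 - C t) / t + t * ((U t - R t) / t\<^sup>2))\<^sup>2)
      \<longlongrightarrow> (1 + u) * N + (real n - 1) * a\<^sub>1 * b\<^sub>1 - 2 * real n * (c\<^sub>1 + 0 * r)\<^sup>2) (at_right 0)"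
    by (intro tendsto_intros num A B C UR U)
  then show "((\<lambda>t. (1 + U t) * (cluster_num n (A t) (B t) (C t) (U t) (R t) / t\<^sup>2)
        + (real n - 1) * ((1 - A t) / t) * ((1 - B t) / t)
        - 2 * real n * ((1 - C t) / t + t * ((U t - R t) / t\<^sup>2))\<^sup>2)
      \<longlongrightarrow> (1 + u) * N + (real n - 1) * a\<^sub>1 * b\<^sub>1 - 2 * real n * c\<^sub>1\<^sup>2) (at_right 0)"
    by simp
  show "\<forall>\<^sub>F t in at_right 0. (1 + U t) * (cluster_num n (A t) (B t) (C t) (U t) (R t) / t\<^sup>2)
        + (real n - 1) * ((1 - A t) / t) * ((1 - B t) / t)
        - 2 * real n * ((1 - C t) / t + t * ((U t - R t) / t\<^sup>2))\<^sup>2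
      = cluster_det n (A t) (B t) (C t) (U t) (R t) / t\<^sup>2"
    using eventually_at_right_less[of 0]
    by eventually_elim (simp add: cluster_det_def field_simps power2_eq_square)
qed

text \<open>\<open>f\<^sup>X(s) = 2 N(s) / D(s)\<close>, where \<open>N(s)\<close> and \<open>D(s)\<close> are the limits of the numerator and
  determinant of the weighting system divided by \<open>t\<^sup>2\<close>.\<close>
definition mag_limit_num :: "nat \<Rightarrow> real \<Rightarrow> real \<Rightarrow> real \<Rightarrow> real \<Rightarrow> real \<Rightarrow> real" where
  "mag_limit_num n a b p q s =
     4 * real n * ((s * p - s\<^sup>2 / 2) + exp (- s) * s * q) + (real n - 1) * s\<^sup>2 * b\<^sup>2
     + n * s\<^sup>2 * a\<^sup>2 / 2"

definition mag_limit_den :: "nat \<Rightarrow> real \<Rightarrow> real \<Rightarrow> real \<Rightarrow> real \<Rightarrow> real \<Rightarrow> real" where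
  "mag_limit_den n a b p q s =
     (1 + exp (- s)) * mag_limit_num n a b p q s + s\<^sup>2 * ((real n - 1) * a * b - 2 * real n)"

definition path_num :: "nat \<Rightarrow> real \<Rightarrow> real \<Rightarrow> real \<Rightarrow> real \<Rightarrow> real \<Rightarrow> real \<Rightarrow> real" where
  "path_num n a b p q s t = cluster_num n (exp (- (s * (a * t)))) (exp (- (s * (b * t))))
     (exp (- (s * (t + p * t\<^sup>2)))) (exp (- s)) (exp (- (s * (1 + q * t\<^sup>2))))"

definition path_det :: "nat \<Rightarrow> real \<Rightarrow> real \<Rightarrow> real \<Rightarrow> real \<Rightarrow> real \<Rightarrow> real \<Rightarrow> real" where
  "path_det n a b p q s t = cluster_det n (exp (- (s * (a * t)))) (exp (- (s * (b * t))))
     (exp (- (s * (t + p * t\<^sup>2)))) (exp (- s)) (exp (- (s * (1 + q * t\<^sup>2))))"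

lemma magnitude_path_dist:
  assumes "path_det n a b p q s t \<noteq> 0"
  shows "has_weighting (cluster_points n) (\<lambda>x y. s * path_dist n a b p q t x y)"
    and "magnitude (cluster_points n) (\<lambda>x y. s * path_dist n a b p q t x y)
           = 2 * path_num n a b p q s t / path_det n a b p q s t"
  using assms magnitude_cluster_dist[of n s "a * t" "b * t" "t + p * t\<^sup>2" "q * t\<^sup>2"]
  unfolding path_dist_def path_num_def path_det_def by auto

lemma path_num_det_tendsto:
  fixes a b p q s :: real
  assumes linear: "4 * real n = 2 * (real n - 1) * b + n * a"
  shows "((\<lambda>t. path_num n a b p q s t / t\<^sup>2) \<longlongrightarrow> mag_limit_num n a b p q s) (at_right 0)"
    and "((\<lambda>t. path_det n a b p q s t / t\<^sup>2) \<longlongrightarrow> mag_limit_den n a b p q s) (at_right 0)"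
proof -
  define A where "A t = exp (- (s * (a * t)))" for t :: real
  define B where "B t = exp (- (s * (b * t)))" for t :: real
  define C where "C t = exp (- (s * (t + p * t\<^sup>2)))" for t :: real
  define R where "R t = exp (- (s * (1 + q * t\<^sup>2)))" for t :: real
  have A: "((\<lambda>t. (1 - A t - (s * a) * t) / t\<^sup>2) \<longlongrightarrow> - (s * a) * (s * a) / 2) (at_right 0)"
    and B: "((\<lambda>t. (1 - B t - (s * b) * t) / t\<^sup>2) \<longlongrightarrow> - (s * b) * (s * b) / 2) (at_right 0)"
    and C: "((\<lambda>t. (1 - C t - s * t) / t\<^sup>2) \<longlongrightarrow> s * p - s * s / 2) (at_right 0)"
    and UR: "((\<lambda>t. (exp (- s) - R t) / t\<^sup>2) \<longlongrightarrow> exp (- s) * s * q) (at_right 0)"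
    unfolding A_def B_def C_def R_def by real_asymp+
  have "4 * real n * s = (2 * (real n - 1) * b + n * a) * s" using linear by simp
  then have linear_s: "4 * real n * s = 2 * (real n - 1) * (s * b) + n * (s * a)"
    by (simp add: algebra_simps)
  have N: "4 * real n * ((s * p - s * s / 2) + exp (- s) * s * q)
      - 2 * (real n - 1) * (- (s * b) * (s * b) / 2) - n * (- (s * a) * (s * a) / 2)
      = mag_limit_num n a b p q s"
    by (simp add: mag_limit_num_def field_simps power2_eq_square)
  have D: "(1 + exp (- s)) * mag_limit_num n a b p q s + (real n - 1) * (s * a) * (s * b)
      - 2 * real n * s\<^sup>2 = mag_limit_den n a b p q s"
    by (simp add: mag_limit_den_def algebra_simps power2_eq_square)
  have num: "((\<lambda>t. cluster_num n (A t) (B t) (C t) (exp (- s)) (R t) / t\<^sup>2)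
      \<longlongrightarrow> mag_limit_num n a b p q s) (at_right 0)"
    using cluster_num_tendsto[OF A B C UR linear_s] unfolding N .
  then show "((\<lambda>t. path_num n a b p q s t / t\<^sup>2) \<longlongrightarrow> mag_limit_num n a b p q s) (at_right 0)"
    unfolding path_num_def A_def B_def C_def R_def .
  have "((\<lambda>t. cluster_det n (A t) (B t) (C t) (exp (- s)) (R t) / t\<^sup>2)
      \<longlongrightarrow> mag_limit_den n a b p q s) (at_right 0)"
    using cluster_det_tendsto[OF num tendsto_divide_of_second_order[OF A]
        tendsto_divide_of_second_order[OF B] tendsto_divide_of_second_order[OF C] UR tendsto_const]
    unfolding D .
  then show "((\<lambda>t. path_det n a b p q s t / t\<^sup>2) \<longlongrightarrow> mag_limit_den n a b p q s) (at_right 0)"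
    unfolding path_det_def A_def B_def C_def R_def .
qed

lemma fX_at_path_dist:
  fixes a b p q s :: real
  assumes linear: "4 * real n = 2 * (real n - 1) * b + n * a"
    and den: "mag_limit_den n a b p q s \<noteq> 0"
  shows "fX_at (\<lambda>_. cluster_points n) (path_dist n a b p q) s
           (2 * mag_limit_num n a b p q s / mag_limit_den n a b p q s)"
  unfolding fX_at_def
proof
  note lim = path_num_det_tendsto[OF linear]
  have "\<forall>\<^sub>F t in at_right 0. path_det n a b p q s t / t\<^sup>2 \<noteq> 0"
    using tendsto_imp_eventually_ne[OF lim(2) den] .
  then have det: "\<forall>\<^sub>F t in at_right 0. path_det n a b p q s t \<noteq> 0"
    by eventually_elim auto
  then show "\<forall>\<^sub>F t in at_right 0.
      has_weighting (cluster_points n) (\<lambda>x y. s * path_dist n a b p q t x y)"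
    by eventually_elim (rule magnitude_path_dist(1))
  have "((\<lambda>t. 2 * (path_num n a b p q s t / t\<^sup>2) / (path_det n a b p q s t / t\<^sup>2))
      \<longlongrightarrow> 2 * mag_limit_num n a b p q s / mag_limit_den n a b p q s) (at_right 0)"
    by (intro tendsto_intros lim den)
  moreover have "\<forall>\<^sub>F t in at_right 0.
      2 * (path_num n a b p q s t / t\<^sup>2) / (path_det n a b p q s t / t\<^sup>2)
      = magnitude (cluster_points n) (\<lambda>x y. s * path_dist n a b p q t x y)"
    using det eventually_at_right_less[of 0] by eventually_elim (simp add: magnitude_path_dist(2))
  ultimately show "((\<lambda>t. magnitude (cluster_points n) (\<lambda>x y. s * path_dist n a b p q t x y))
      \<longlongrightarrow> 2 * mag_limit_num n a b p q s / mag_limit_den n a b p q s) (at_right 0)"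
    by (simp add: Lim_transform_eventually)
qed

lemma exists_cluster_path:
  fixes a b p q :: real and F :: "real filter" and P :: "(real \<Rightarrow> real) \<Rightarrow> bool"
  assumes "0 < a" "a < 2" "0 < b" "b < 2" and linear: "4 * real n = 2 * (real n - 1) * b + n * a"
    and den: "\<forall>\<^sub>F s in F. mag_limit_den n a b p q s \<noteq> 0"
    and P: "P (\<lambda>s. 2 * mag_limit_num n a b p q s / mag_limit_den n a b p q s)"
  shows "\<exists>(X :: real \<Rightarrow> nat set) d. fmet_path X d \<and> gh_tendsto X d (UNIV :: bool set) K2_dist \<and>
           (\<exists>f. (\<forall>\<^sub>F s in F. fX_at X d s (f s)) \<and> P f)"
proof (intro exI conjI)
  show "fmet_path (\<lambda>_. cluster_points n) (path_dist n a b p q)"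
    using assms(1-4) by (rule fmet_path_dist)
  show "gh_tendsto (\<lambda>_. cluster_points n) (path_dist n a b p q) UNIV K2_dist"
    by (rule gh_tendsto_path_dist)
  show "\<forall>\<^sub>F s in F. fX_at (\<lambda>_. cluster_points n) (path_dist n a b p q) s
      (2 * mag_limit_num n a b p q s / mag_limit_den n a b p q s)"
    using den by eventually_elim (rule fX_at_path_dist[OF linear])
qed (fact P)

section \<open>The three examples\<close>

text \<open>With \<open>q = -p\<close> the term of order \<open>s\<close> in \<open>mag_limit_num\<close> cancels.\<close>
lemma mag_limit_num_den_at_0:
  fixes k :: real
  shows "((\<lambda>s. mag_limit_num 3 (8/5) (9/5) k (- k) s / s\<^sup>2) \<longlongrightarrow> 12 * k + 108 / 25) (at_right 0)"
    and "((\<lambda>s. mag_limit_den 3 (8/5) (9/5) k (- k) s / s\<^sup>2) \<longlongrightarrow> 2 * (12 * k + 108 / 25) - 6 / 25)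
           (at_right 0)"
proof -
  let ?N = "mag_limit_num 3 (8/5) (9/5) k (- k)"
  show N: "((\<lambda>s. ?N s / s\<^sup>2) \<longlongrightarrow> 12 * k + 108 / 25) (at_right 0)"
    unfolding mag_limit_num_def by real_asymp (simp add: power2_eq_square)
  have "((\<lambda>s. (1 + exp (- s)) * (?N s / s\<^sup>2) - 6 / 25)
      \<longlongrightarrow> (1 + exp (- 0)) * (12 * k + 108 / 25) - 6 / 25) (at_right 0)"
    by (intro tendsto_intros N) auto
  moreover have "\<forall>\<^sub>F s in at_right 0. (1 + exp (- s)) * (?N s / s\<^sup>2) - 6 / 25
      = mag_limit_den 3 (8/5) (9/5) k (- k) s / s\<^sup>2"
    using eventually_at_right_less[of 0]
    by eventually_elim (simp add: mag_limit_den_def field_simps power2_eq_square)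
  ultimately show "((\<lambda>s. mag_limit_den 3 (8/5) (9/5) k (- k) s / s\<^sup>2)
      \<longlongrightarrow> 2 * (12 * k + 108 / 25) - 6 / 25) (at_right 0)"
    by (simp add: Lim_transform_eventually)
qed

lemma exists_path_fX_tendsto_at_0:
  fixes l :: real
  assumes "1 < l"
  shows "\<exists>(X :: real \<Rightarrow> nat set) d. fmet_path X d \<and> gh_tendsto X d (UNIV :: bool set) K2_dist \<and>
           (\<exists>f. (\<forall>\<^sub>F s in at_right 0. fX_at X d s (f s)) \<and> (f \<longlongrightarrow> l) (at_right 0))"
proof -
  define k where "k = (3 * l / (25 * (l - 1)) - 108 / 25) / 12"
  let ?N = "mag_limit_num 3 (8/5) (9/5) k (- k)" and ?D = "mag_limit_den 3 (8/5) (9/5) k (- k)"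
  have "2 * (12 * k + 108 / 25) - 6 / 25 = 6 / (25 * (l - 1))"
    using assms unfolding k_def by (simp add: field_simps)
  note lim = mag_limit_num_den_at_0(1)[of k] mag_limit_num_den_at_0(2)[of k, unfolded this]
  have D_ne: "6 / (25 * (l - 1)) \<noteq> 0" using assms by simp
  have "\<forall>\<^sub>F s in at_right 0. ?D s / s\<^sup>2 \<noteq> 0"
    using tendsto_imp_eventually_ne[OF lim(2) D_ne] .
  then have den: "\<forall>\<^sub>F s in at_right 0. ?D s \<noteq> 0"
    by eventually_elim auto
  have "((\<lambda>s. 2 * (?N s / s\<^sup>2) / (?D s / s\<^sup>2)) \<longlongrightarrow> 2 * (12 * k + 108 / 25) / (6 / (25 * (l - 1))))
      (at_right 0)"
    by (intro tendsto_intros lim D_ne)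
  moreover have "2 * (12 * k + 108 / 25) / (6 / (25 * (l - 1))) = l"
    using assms unfolding k_def by (simp add: field_simps)
  moreover have "\<forall>\<^sub>F s in at_right 0. 2 * (?N s / s\<^sup>2) / (?D s / s\<^sup>2) = 2 * ?N s / ?D s"
    using eventually_at_right_less[of 0] by eventually_elim simp
  ultimately have "((\<lambda>s. 2 * ?N s / ?D s) \<longlongrightarrow> l) (at_right 0)"
    by (simp add: Lim_transform_eventually)
  with den show ?thesis
    by (intro exists_cluster_path) auto
qed

lemma exists_params_at_top:
  fixes L :: real
  assumes "2 < L"
  obtains n :: nat and a b :: real where "0 < a" "a < 2" "0 < b" "b < 2"
    and "4 * real n = 2 * (real n - 1) * b + n * a"
    and "2 * ((real n - 1) * b\<^sup>2 + n * a\<^sup>2 / 2 - 2 * real n) = L * ((real n - 1) * (b - 2)\<^sup>2 + 4)"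
proof -
  define n where "n = nat \<lceil>L\<rceil> + 2"
  have n: "L + 2 \<le> real n" "4 < real n" using assms unfolding n_def by linarith+
  define a where "a b = (4 * real n - 2 * (real n - 1) * b) / n" for b
  define G where "G b = 2 * ((real n - 1) * b\<^sup>2 + n * (a b)\<^sup>2 / 2 - 2 * real n)
    - L * ((real n - 1) * (b - 2)\<^sup>2 + 4)" for b
  define b\<^sub>0 where "b\<^sub>0 = n / (real n - 1)"
  have b\<^sub>0: "1 < b\<^sub>0" "b\<^sub>0 < 2" using n unfolding b\<^sub>0_def by (auto simp: field_simps)
  \<comment> \<open>At \<open>b\<^sub>0\<close> the pole distance is \<open>a = 2\<close>; the IVT runs over the admissible range
    \<open>b\<^sub>0 < b < 2\<close>.\<close>
  have "a b\<^sub>0 = 2" using n unfolding a_def b\<^sub>0_def by (simp add: field_simps)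
  have "(real n - 1) * (b\<^sub>0 - 2)\<^sup>2 + 4 = (real n - 1) * b\<^sub>0\<^sup>2 - 4 * ((real n - 1) * b\<^sub>0) + 4 * n"
    by (simp add: power2_eq_square algebra_simps)
  also have "(real n - 1) * b\<^sub>0 = n" using n unfolding b\<^sub>0_def by simp
  finally have E_b\<^sub>0: "(real n - 1) * (b\<^sub>0 - 2)\<^sup>2 + 4 = (real n - 1) * b\<^sub>0\<^sup>2" by simp
  have "G b\<^sub>0 = (2 - L) * (real n - 1) * b\<^sub>0\<^sup>2"
    unfolding G_def \<open>a b\<^sub>0 = 2\<close> E_b\<^sub>0 by (simp add: algebra_simps)
  then have "G b\<^sub>0 < 0" using assms n b\<^sub>0 by (simp add: mult_neg_pos)
  have "G 2 = 4 * (real n - 2 - L) + 16 / n"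
    using n unfolding G_def a_def by (simp add: field_simps power2_eq_square)
  then have "0 < G 2" using n by (simp add: add_nonneg_pos)
  have "continuous_on {b\<^sub>0..2} G"
    unfolding G_def a_def by (intro continuous_intros) (use n in auto)
  then obtain b where b: "b\<^sub>0 \<le> b" "b \<le> 2" "G b = 0"
    using IVT'[of G b\<^sub>0 0 2] \<open>G b\<^sub>0 < 0\<close> \<open>0 < G 2\<close> b\<^sub>0 by auto
  then have "b\<^sub>0 < b" "b < 2" using \<open>G b\<^sub>0 < 0\<close> \<open>0 < G 2\<close> by (auto simp: order.order_iff_strict)
  show ?thesis
  proof (rule that[of "a b" b])
    have "(real n - 1) * b < (real n - 1) * 2"
      using \<open>b < 2\<close> n by (intro mult_strict_left_mono) auto
    moreover have "real n < (real n - 1) * b"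
      using \<open>b\<^sub>0 < b\<close> n unfolding b\<^sub>0_def by (simp add: field_simps)
    ultimately show "0 < a b" "a b < 2"
      using n unfolding a_def by (auto simp: field_simps)
    show "0 < b" "b < 2" using \<open>b\<^sub>0 < b\<close> \<open>b < 2\<close> b\<^sub>0 by auto
    show "4 * real n = 2 * (real n - 1) * b + n * a b"
      using n unfolding a_def by simp
    show "2 * ((real n - 1) * b\<^sup>2 + n * (a b)\<^sup>2 / 2 - 2 * real n)
        = L * ((real n - 1) * (b - 2)\<^sup>2 + 4)"
      using \<open>G b = 0\<close> unfolding G_def by simp
  qed
qed

lemma exists_path_fX_tendsto_at_top:
  fixes L :: real
  assumes "2 < L"
  shows "\<exists>(X :: real \<Rightarrow> nat set) d. fmet_path X d \<and> gh_tendsto X d (UNIV :: bool set) K2_dist \<and>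
           (\<exists>f. (\<forall>\<^sub>F s in at_top. fX_at X d s (f s)) \<and> (f \<longlongrightarrow> L) at_top)"
proof -
  obtain n a b where ab: "0 < a" "a < 2" "0 < b" "b < 2"
    and linear: "4 * real n = 2 * (real n - 1) * b + n * a"
    and choice: "2 * ((real n - 1) * b\<^sup>2 + n * a\<^sup>2 / 2 - 2 * real n)
      = L * ((real n - 1) * (b - 2)\<^sup>2 + 4)"
    using exists_params_at_top[OF assms] .
  define N where "N = (real n - 1) * b\<^sup>2 + n * a\<^sup>2 / 2 - 2 * real n"
  define E where "E = (real n - 1) * (b - 2)\<^sup>2 + 4"
  have "n \<noteq> 0"
  proof
    assume "n = 0"
    with linear ab show False by simp
  qed
  then have "0 < E" unfolding E_def by (intro add_nonneg_pos mult_nonneg_nonneg) auto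
  have num: "mag_limit_num n a b 0 0 s = s\<^sup>2 * N" for s
    unfolding mag_limit_num_def N_def by (simp add: algebra_simps power2_eq_square)
  have den: "mag_limit_den n a b 0 0 s = s\<^sup>2 * (E + exp (- s) * N)" for s
    unfolding mag_limit_den_def num unfolding E_def N_def using linear by algebra
  have lim: "((\<lambda>s. E + exp (- s) * N) \<longlongrightarrow> E) at_top"
    by real_asymp
  have "\<forall>\<^sub>F s in at_top. E + exp (- s) * N \<noteq> 0"
    using tendsto_imp_eventually_ne[OF lim] \<open>0 < E\<close> by simp
  then have ne: "\<forall>\<^sub>F s in at_top. s \<noteq> 0 \<and> E + exp (- s) * N \<noteq> 0"
    using eventually_gt_at_top[of 0] by eventually_elim auto
  have "((\<lambda>s. 2 * N / (E + exp (- s) * N)) \<longlongrightarrow> 2 * N / E) at_top"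
    using \<open>0 < E\<close> by (intro tendsto_intros lim) auto
  moreover have "2 * N / E = L"
    using choice \<open>0 < E\<close> unfolding N_def E_def by (simp add: field_simps)
  moreover have "\<forall>\<^sub>F s in at_top.
      2 * N / (E + exp (- s) * N) = 2 * mag_limit_num n a b 0 0 s / mag_limit_den n a b 0 0 s"
    using ne by eventually_elim (simp add: num den)
  ultimately have "((\<lambda>s. 2 * mag_limit_num n a b 0 0 s / mag_limit_den n a b 0 0 s) \<longlongrightarrow> L) at_top"
    by (simp add: Lim_transform_eventually)
  moreover have "\<forall>\<^sub>F s in at_top. mag_limit_den n a b 0 0 s \<noteq> 0"
    using ne by eventually_elim (simp add: den)
  ultimately show ?thesis
    using ab linear by (intro exists_cluster_path) auto
qed

lemma eventually_ne_at_of_deriv_ne_0: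
  fixes g :: "real \<Rightarrow> real"
  assumes "(g has_real_derivative g') (at x)" "g' \<noteq> 0"
  shows "\<forall>\<^sub>F y in at x. g y \<noteq> g x"
proof -
  have "((\<lambda>y. (g y - g x) / (y - x)) \<longlongrightarrow> g') (at x)"
    using assms(1) unfolding has_field_derivative_iff .
  from tendsto_imp_eventually_ne[OF this assms(2)] show ?thesis
    by eventually_elim auto
qed

lemma not_eventually_bounded_divide:
  fixes N g :: "real \<Rightarrow> real"
  assumes "F \<noteq> bot" "(N \<longlongrightarrow> c) F" "c \<noteq> 0" "(g \<longlongrightarrow> 0) F" "\<forall>\<^sub>F y in F. g y \<noteq> 0"
  shows "\<not> (\<exists>M. \<forall>\<^sub>F y in F. \<bar>N y / g y\<bar> \<le> M)"
proof
  assume "\<exists>M. \<forall>\<^sub>F y in F. \<bar>N y / g y\<bar> \<le> M"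
  then obtain M where M: "\<forall>\<^sub>F y in F. \<bar>N y / g y\<bar> \<le> M" by blast
  have "filterlim (\<lambda>y. N y / g y) at_infinity F"
    using assms(2-5) by (intro filterlim_divide_at_infinity filterlim_atI)
  then have large: "\<forall>r>0. \<forall>\<^sub>F y in F. r \<le> norm (N y / g y)"
    unfolding filterlim_at_infinity[OF order_refl] .
  have "\<forall>\<^sub>F y in F. \<bar>M\<bar> + 1 \<le> norm (N y / g y)"
    by (rule large[rule_format]) simp
  with M have "\<forall>\<^sub>F y in F. False"
    by eventually_elim (smt (verit) real_norm_def)
  with assms(1) show False by simp
qed

lemma mag_limit_den_simple_zero:
  fixes S :: real
  assumes "0 < S"
  obtains p D' where "mag_limit_den 3 (8/5) (9/5) p 0 S = 0" "mag_limit_num 3 (8/5) (9/5) p 0 S \<noteq> 0"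
    and "(mag_limit_den 3 (8/5) (9/5) p 0 has_real_derivative D') (at S)" "D' \<noteq> 0"
proof -
  define \<nu> where "\<nu> = (6 / 25) / (1 + exp (- S))"
  define p where "p = (\<nu> - 108 / 25) * S / 12"
  \<comment> \<open>Then \<open>N(s) = (\<nu> - 108/25) S s + 108/25 s\<^sup>2\<close> takes the value \<open>\<nu> S\<^sup>2\<close> at \<open>S\<close>, and
    \<open>(1 + exp (-S)) \<nu> = 6/25\<close> makes \<open>D(S) = (1 + exp (-S)) N(S) - 6/25 S\<^sup>2\<close> vanish.\<close>
  let ?N = "mag_limit_num 3 (8/5) (9/5) p 0" and ?D = "mag_limit_den 3 (8/5) (9/5) p 0"
  have N: "?N = (\<lambda>s. (\<nu> - 108 / 25) * S * s + 108 / 25 * s\<^sup>2)"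
    unfolding mag_limit_num_def p_def by (simp add: fun_eq_iff field_simps power2_eq_square)
  have D: "?D = (\<lambda>s. (1 + exp (- s)) * ?N s - 6 / 25 * s\<^sup>2)"
    unfolding mag_limit_den_def by (simp add: fun_eq_iff algebra_simps power2_eq_square)
  have pos: "0 < 1 + exp (- S)" by (simp add: add_pos_pos)
  then have "1 + exp (- S) \<noteq> 0" by simp
  then have \<nu>: "0 < \<nu>" "\<nu> < 6 / 25" "(1 + exp (- S)) * \<nu> = 6 / 25"
    unfolding \<nu>_def using pos by (simp_all add: divide_less_eq field_simps)
  have NS: "?N S = \<nu> * S\<^sup>2"
    unfolding N by (simp add: algebra_simps power2_eq_square)
  have "?D S = ((1 + exp (- S)) * \<nu> - 6 / 25) * S\<^sup>2"
    unfolding D NS by (simp add: algebra_simps)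
  then have "?D S = 0" using \<nu>(3) by simp
  define D' where "D' = S * (108 / 25 + 108 / 25 * exp (- S) - 6 / 25 - \<nu> * (exp (- S) * S))"
  have "(?D has_real_derivative
      - exp (- S) * ?N S + (1 + exp (- S)) * ((\<nu> + 108 / 25) * S) - 12 / 25 * S) (at S)"
    unfolding D N by (auto intro!: derivative_eq_intros simp: field_simps power2_eq_square)
  moreover have "- exp (- S) * ?N S + (1 + exp (- S)) * ((\<nu> + 108 / 25) * S) - 12 / 25 * S = D'"
  proof -
    have "- exp (- S) * ?N S + (1 + exp (- S)) * ((\<nu> + 108 / 25) * S) - 12 / 25 * S
        = - exp (- S) * (\<nu> * S\<^sup>2) + ((1 + exp (- S)) * \<nu>) * S
          + (108 / 25 + 108 / 25 * exp (- S)) * S - 12 / 25 * S"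
      unfolding NS by (simp add: algebra_simps)
    then show ?thesis
      unfolding \<nu>(3) D'_def by (simp add: algebra_simps power2_eq_square)
  qed
  ultimately have deriv: "(?D has_real_derivative D') (at S)" by simp
  have "\<nu> * (exp (- S) * S) < \<nu>"
    using exp_gt_self[of S] \<open>0 < S\<close> \<nu>(1) by (simp add: exp_minus field_simps)
  then have "0 < 108 / 25 + 108 / 25 * exp (- S) - 6 / 25 - \<nu> * (exp (- S) * S)"
    using \<nu>(2) exp_gt_zero[of "- S"] by linarith
  then have "D' \<noteq> 0"
    using \<open>0 < S\<close> unfolding D'_def by simp
  show ?thesis
    using \<open>?D S = 0\<close> deriv \<open>D' \<noteq> 0\<close> \<nu>(1) \<open>0 < S\<close> NS by (intro that[of p D']) auto
qed

lemma exists_path_fX_unbounded_at: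
  fixes S :: real
  assumes "0 < S"
  shows "\<exists>(X :: real \<Rightarrow> nat set) d. fmet_path X d \<and> gh_tendsto X d (UNIV :: bool set) K2_dist \<and>
           (\<exists>f. (\<forall>\<^sub>F s in at S. fX_at X d s (f s)) \<and> \<not> (\<exists>M. \<forall>\<^sub>F s in at S. \<bar>f s\<bar> \<le> M))"
proof -
  obtain p D' where zero: "mag_limit_den 3 (8/5) (9/5) p 0 S = 0"
    and N_ne: "mag_limit_num 3 (8/5) (9/5) p 0 S \<noteq> 0"
    and deriv: "(mag_limit_den 3 (8/5) (9/5) p 0 has_real_derivative D') (at S)" and "D' \<noteq> 0"
    using mag_limit_den_simple_zero[OF assms] .
  let ?N = "mag_limit_num 3 (8/5) (9/5) p 0" and ?D = "mag_limit_den 3 (8/5) (9/5) p 0"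
  have "\<forall>\<^sub>F s in at S. ?D s \<noteq> ?D S"
    using deriv \<open>D' \<noteq> 0\<close> by (rule eventually_ne_at_of_deriv_ne_0)
  then have den: "\<forall>\<^sub>F s in at S. ?D s \<noteq> 0"
    unfolding zero .
  have D_lim: "(?D \<longlongrightarrow> 0) (at S)"
    using DERIV_isCont[OF deriv] zero by (simp add: isCont_def)
  have N_lim: "((\<lambda>s. 2 * ?N s) \<longlongrightarrow> 2 * ?N S) (at S)"
    unfolding mag_limit_num_def by (intro tendsto_intros) auto
  have "\<not> (\<exists>M. \<forall>\<^sub>F s in at S. \<bar>2 * ?N s / ?D s\<bar> \<le> M)"
    using not_eventually_bounded_divide[OF at_neq_bot N_lim _ D_lim den] N_ne by simp
  with den show ?thesis
    by (intro exists_cluster_path) auto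
qed

theorem theorem2p7:
  shows
   "(\<forall>l::real. l > 1 \<longrightarrow>
      (\<exists>(X :: real \<Rightarrow> nat set) d. fmet_path X d \<and> gh_tendsto X d (UNIV :: bool set) K2_dist \<and>
         (\<exists>f. (\<forall>\<^sub>F s in at_right 0. fX_at X d s (f s)) \<and> (f \<longlongrightarrow> l) (at_right 0)))) \<and>
    (\<forall>L::real. L > 2 \<longrightarrow>
      (\<exists>(X :: real \<Rightarrow> nat set) d. fmet_path X d \<and> gh_tendsto X d (UNIV :: bool set) K2_dist \<and>
         (\<exists>f. (\<forall>\<^sub>F s in at_top. fX_at X d s (f s)) \<and> (f \<longlongrightarrow> L) at_top))) \<and>
    (\<forall>S::real. S > 0 \<longrightarrow>
      (\<exists>(X :: real \<Rightarrow> nat set) d. fmet_path X d \<and> gh_tendsto X d (UNIV :: bool set) K2_dist \<and>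
         (\<exists>f. (\<forall>\<^sub>F s in at S. fX_at X d s (f s)) \<and>
              \<not> (\<exists>M. \<forall>\<^sub>F s in at S. \<bar>f s\<bar> \<le> M))))"
  by (intro conjI allI impI exists_path_fX_tendsto_at_0 exists_path_fX_tendsto_at_top
      exists_path_fX_unbounded_at)

end
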